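(* Let $E$ be a finite nonempty set, $X\in\mathcal{X}(2)\setminus\mathcal{X}^*(2)$, and let $f:2^E\to\mathbb{N}$ and $S,T\subseteq E$ satisfy: $X=\mathbb{B}_f(2)$; for every $U\subseteq E$ there is $\vec x\in\mathbb{B}_f(2)$ with $x(U)=f(U)$; and $f(S)=f(T)=f(S\cap T)=1$, $f(S\cup T)=2$. Then for every $\vec x\in\mathbb{B}_f(2)$ with $\mathrm{supp}(\vec x)\subseteq S\cup T$ we have $\mathrm{supp}(\vec x)\cap(S\cap T)=\emptyset$.
   Context: $\mathbb{N}=\{0,1,2,\dots\}$; $x(U)=\sum_{e\in U}x_e$; $\mathrm{supp}(\vec x)=\{e: x_e\neq0\}$. For $f:2^E\to\mathbb{N}$, $\mathbb{B}_f(d)=\{\vec x\in\mathbb{N}^E: x(U)\le f(U)\ \forall U\subseteq E,\ x(E)=d\}$. $f$ is strictly positive if $f(U)>0$ for all nonempty $U$, normalized if $f(\emptyset)=0$, monotonic if $f(U)\le f(V)$ for $U\subseteq V$. $\mathcal{X}(d)=\{\mathbb{B}_f(d): f \text{ strictly positive, normalized, monotonic}\}$, $\mathcal{X}^*(d)=\{\mathbb{B}_f(d): f\text{ strictly positive, normalized, monotonic, submodular}\}$. *)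

theory Defs
  imports Main
begin

text \<open>Vectors in N^E are functions 'a => nat vanishing outside the ground set E.
  Set functions f : 2^E -> N are functions 'a set => nat; only their values on subsets of E matter.\<close>

definition supp :: "('a \<Rightarrow> nat) \<Rightarrow> 'a set" where
  "supp x = {e. x e \<noteq> 0}"

definition polymatroid_slice :: "'a set \<Rightarrow> ('a set \<Rightarrow> nat) \<Rightarrow> nat \<Rightarrow> ('a \<Rightarrow> nat) set" where
  "polymatroid_slice E f d =
     {x. (\<forall>e. e \<notin> E \<longrightarrow> x e = 0) \<and> (\<forall>U. U \<subseteq> E \<longrightarrow> sum x U \<le> f U) \<and> sum x E = d}"

definition strictly_positive :: "'a set \<Rightarrow> ('a set \<Rightarrow> nat) \<Rightarrow> bool" where
  "strictly_positive E f \<longleftrightarrow> (\<forall>U. U \<subseteq> E \<longrightarrow> U \<noteq> {} \<longrightarrow> f U > 0)"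

definition normalized :: "('a set \<Rightarrow> nat) \<Rightarrow> bool" where
  "normalized f \<longleftrightarrow> f {} = 0"

definition monotonic :: "'a set \<Rightarrow> ('a set \<Rightarrow> nat) \<Rightarrow> bool" where
  "monotonic E f \<longleftrightarrow> (\<forall>U V. U \<subseteq> V \<longrightarrow> V \<subseteq> E \<longrightarrow> f U \<le> f V)"

definition submodular :: "'a set \<Rightarrow> ('a set \<Rightarrow> nat) \<Rightarrow> bool" where
  "submodular E f \<longleftrightarrow> (\<forall>U V. U \<subseteq> E \<longrightarrow> V \<subseteq> E \<longrightarrow> f (U \<union> V) + f (U \<inter> V) \<le> f U + f V)"

definition calX :: "'a set \<Rightarrow> nat \<Rightarrow> ('a \<Rightarrow> nat) set set" where
  "calX E d = {polymatroid_slice E f d | f. strictly_positive E f \<and> normalized f \<and> monotonic E f}"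

definition calX_star :: "'a set \<Rightarrow> nat \<Rightarrow> ('a \<Rightarrow> nat) set set" where
  "calX_star E d = {polymatroid_slice E f d | f.
     strictly_positive E f \<and> normalized f \<and> monotonic E f \<and> submodular E f}"

end

theory Submission
  imports Defs
begin

text \<open>A vector of the slice with support in \<open>S \<union> T\<close> has total mass \<open>d = x(S \<union> T)\<close>; by
  modularity of the sum, \<open>x(S \<inter> T) = x(S) + x(T) - x(S \<union> T) \<le> f(S) + f(T) - d\<close>, which is
  \<open>0\<close> as soon as \<open>f(S) + f(T) \<le> d\<close>.\<close>

lemma polymatroid_slice_sum_le:
  assumes "x \<in> polymatroid_slice E f d" and "U \<subseteq> E"
  shows "sum x U \<le> f U"
  using assms unfolding polymatroid_slice_def by blast

lemma polymatroid_slice_sum_supp_superset: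
  assumes "finite E" and "x \<in> polymatroid_slice E f d"
    and "supp x \<subseteq> A" and "A \<subseteq> E"
  shows "sum x A = d"
proof -
  have "sum x A = sum x E"
    by (rule sum.mono_neutral_left) (use assms in \<open>auto simp: supp_def\<close>)
  also have "\<dots> = d"
    using assms(2) unfolding polymatroid_slice_def by blast
  finally show ?thesis .
qed

lemma supp_disjoint_if_sum_eq_0:
  assumes "finite A" and "sum x A = (0::nat)"
  shows "supp x \<inter> A = {}"
  using assms by (auto simp: supp_def)

lemma polymatroid_slice_supp_disjoint_inter:
  assumes "finite E" and "x \<in> polymatroid_slice E f d"
    and "S \<subseteq> E" and "T \<subseteq> E" and "supp x \<subseteq> S \<union> T"
    and "f S + f T \<le> d"
  shows "supp x \<inter> (S \<inter> T) = {}"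
proof -
  have fin: "finite S" "finite T"
    using assms(1,3,4) finite_subset by auto
  have "sum x (S \<union> T) + sum x (S \<inter> T) = sum x S + sum x T"
    using sum.union_inter[OF fin] .
  moreover have "sum x (S \<union> T) = d"
    using polymatroid_slice_sum_supp_superset assms(1-5) by blast
  moreover have "sum x S \<le> f S" "sum x T \<le> f T"
    using polymatroid_slice_sum_le assms(2-4) by blast+
  ultimately have "sum x (S \<inter> T) = 0"
    using assms(6) by linarith
  then show ?thesis
    using supp_disjoint_if_sum_eq_0 fin by blast
qed

theorem lemma6p2:
  fixes E :: "'a set" and X :: "('a \<Rightarrow> nat) set" and f :: "'a set \<Rightarrow> nat" and S T :: "'a set"
  assumes "finite E" and "E \<noteq> {}"
    and "X \<in> calX E 2 - calX_star E 2"
    and "X = polymatroid_slice E f 2"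
    and "\<forall>U. U \<subseteq> E \<longrightarrow> (\<exists>x\<in>polymatroid_slice E f 2. sum x U = f U)"
    and "S \<subseteq> E" and "T \<subseteq> E"
    and "f S = 1" and "f T = 1" and "f (S \<inter> T) = 1" and "f (S \<union> T) = 2"
  shows "\<forall>x\<in>polymatroid_slice E f 2. supp x \<subseteq> S \<union> T \<longrightarrow> supp x \<inter> (S \<inter> T) = {}"
  using polymatroid_slice_supp_disjoint_inter[of E _ f 2 S T] assms(1,6-9) by simp

end
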